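(* For all integers $\alpha\ge2$, $0\le m\le\alpha$ and $n\in\mathbb Z$, $$r_{\alpha-1,n}r_{\alpha-1,n+1}c_{\alpha,m,n}=r_{\alpha,n}r_{\alpha-1,n+1}c_{\alpha-1,m,n}+r_{\alpha-1,n}r_{\alpha,n+1}c_{\alpha-1,m-1,n}+r_{\alpha,n}r_{\alpha,n+1}c_{\alpha-2,m-1,n}.$$
   Context: Let $(r_{1,n})_{n\in\mathbb Z}$ be a sequence of elements of a field $K$. Set $r_{0,n}=1$ and for $\alpha\ge1$, $r_{\alpha,n}=\det_{1\le i,j\le\alpha}(r_{1,n+i+j-1-\alpha})$. For $p\ge0$ define $s_p(j)=j$ if $j\le p$ and $s_p(j)=j+1$ if $j>p$. For $\alpha\ge1$ and $0\le m\le\alpha$ define the "Wronskian with a defect" $$c_{\alpha,m,n}=\det_{1\le i,j\le\alpha}\bigl(r_{1,\,n+i+s_{\alpha-m}(j)-\alpha-1}\bigr),$$ set $c_{0,0,n}=1$, and set $c_{\alpha,m,n}=0$ whenever $m<0$ or $m>\alpha$. (Thus $c_{\alpha,0,n}=r_{\alpha,n}$ and $c_{\alpha,\alpha,n}=r_{\alpha,n+1}$.) *)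

theory Defs
  imports "Jordan_Normal_Form.Determinant"
begin

text \<open>The shift map s_p on 1-based column indices.\<close>
definition s_shift :: "nat \<Rightarrow> nat \<Rightarrow> nat" where
  "s_shift p j = (if j \<le> p then j else j + 1)"

text \<open>Hankel determinants r_{alpha,n}; matrix indices are 0-based, so entry (i,j) of the
  paper (1-based) is entry (i-1,j-1) here.  For alpha = 0 the empty determinant is 1.\<close>
definition hankel_r :: "(int \<Rightarrow> 'a::field) \<Rightarrow> nat \<Rightarrow> int \<Rightarrow> 'a" where
  "hankel_r r1 \<alpha> n = det (mat \<alpha> \<alpha> (\<lambda>(i,j).
      r1 (n + int (i+1) + int (j+1) - 1 - int \<alpha>)))"

definition wronsk_c :: "(int \<Rightarrow> 'a::field) \<Rightarrow> nat \<Rightarrow> int \<Rightarrow> int \<Rightarrow> 'a" where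
  "wronsk_c r1 \<alpha> m n =
     (if m < 0 \<or> m > int \<alpha> then 0
      else if \<alpha> = 0 then 1
      else det (mat \<alpha> \<alpha> (\<lambda>(i,j).
        r1 (n + int (i+1) + int (s_shift (\<alpha> - nat m) (j+1)) - int \<alpha> - 1))))"

end

theory Submission
  imports Defs "Jordan_Normal_Form.Char_Poly"
begin

text \<open>
  The recurrence for Wronskians with a defect follows from the Desnanot--Jacobi identity
  applied to two auxiliary bordered Hankel matrices.

  It is shown via
  the adjugate when det M \<noteq> 0, and in general by passing to the characteristic matrix,
  whose determinant is monic, hence nonzero, and evaluating at 0.

  A Hankel block with a unit row e_p on top has determinant (-1)^p times the Wronskian with
  column p deleted.  Desnanot--Jacobi for this bordered matrix, and for a variant whose last
  column is a unit vector, gives two identities sharing one unknown bordered determinant;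
  eliminating it yields the recurrence, which the theorem restates in the original notation.
\<close>

definition det_of :: "nat \<Rightarrow> (nat \<Rightarrow> nat \<Rightarrow> 'a::comm_ring_1) \<Rightarrow> 'a" where
  "det_of n f = det (mat n n (\<lambda>(i,j). f i j))"

text \<open>The column (or row) index map of a minor: deleting index q shifts indices \<open>\<ge> q\<close> by one.\<close>
definition skip :: "nat \<Rightarrow> nat \<Rightarrow> nat" where
  "skip q j = (if j < q then j else Suc j)"

lemma skip_simps [simp]: "skip 0 j = Suc j" "j < q \<Longrightarrow> skip q j = j"
  by (auto simp: skip_def)

lemma det_of_cong:
  assumes "n = m" and "\<And>i j. i < n \<Longrightarrow> j < n \<Longrightarrow> f i j = g i j"
  shows "det_of n f = det_of m g"
proof -
  have "mat n n (\<lambda>(i,j). f i j) = mat n n (\<lambda>(i,j). g i j)"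
    by (rule eq_matI) (auto simp: assms(2))
  then show ?thesis unfolding det_of_def using assms(1) by simp
qed

lemma det_of_0 [simp]: "det_of 0 f = 1"
  unfolding det_of_def by simp

lemma det_of_transpose: "det_of n f = det_of n (\<lambda>i j. f j i)"
proof -
  have "(mat n n (\<lambda>(i,j). f i j))\<^sup>T = mat n n (\<lambda>(i,j). f j i)"
    by (rule eq_matI) auto
  then show ?thesis
    unfolding det_of_def by (metis det_transpose mat_carrier)
qed

lemma cofactor_det_of:
  assumes "r < n" "q < n"
  shows "cofactor (mat n n (\<lambda>(i,j). f i j)) r q
       = (-1)^(r+q) * det_of (n-1) (\<lambda>i j. f (skip r i) (skip q j))"
proof -
  have "mat_delete (mat n n (\<lambda>(i,j). f i j)) r q = mat (n-1) (n-1) (\<lambda>(i,j). f (skip r i) (skip q j))"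
    unfolding mat_delete_def skip_def by (rule eq_matI) auto
  then show ?thesis unfolding cofactor_def det_of_def by simp
qed

lemma det_of_unit_row:
  assumes r: "r < n" and q: "q < n"
    and row: "\<And>j. j < n \<Longrightarrow> f r j = (if j = q then c else 0)"
  shows "det_of n f = c * (-1)^(r+q) * det_of (n-1) (\<lambda>i j. f (skip r i) (skip q j))"
proof -
  let ?A = "mat n n (\<lambda>(i,j). f i j)"
  have "det_of n f = (\<Sum>j<n. ?A $$ (r,j) * cofactor ?A r j)"
    unfolding det_of_def by (rule laplace_expansion_row[OF _ r]) auto
  also have "\<dots> = (\<Sum>j<n. if j = q then c * cofactor ?A r q else 0)"
    by (rule sum.cong) (auto simp: row r)
  also have "\<dots> = c * cofactor ?A r q" using q by simp
  finally show ?thesis using cofactor_det_of[OF r q, of f] by (simp add: mult.assoc)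
qed

lemma det_of_unit_col:
  assumes r: "r < n" and q: "q < n"
    and col: "\<And>i. i < n \<Longrightarrow> f i q = (if i = r then c else 0)"
  shows "det_of n f = c * (-1)^(r+q) * det_of (n-1) (\<lambda>i j. f (skip r i) (skip q j))"
proof -
  have "det_of n f = det_of n (\<lambda>i j. f j i)"
    by (rule det_of_transpose)
  also have "\<dots> = c * (-1)^(q+r) * det_of (n-1) (\<lambda>i j. f (skip r j) (skip q i))"
    by (rule det_of_unit_row[OF q r]) (simp add: col)
  also have "det_of (n-1) (\<lambda>i j. f (skip r j) (skip q i)) = det_of (n-1) (\<lambda>i j. f (skip r i) (skip q j))"
    by (rule det_of_transpose[symmetric])
  finally show ?thesis by (simp add: add.commute)
qed

lemma det_of_zero_row:
  assumes "r < n" and "\<And>j. j < n \<Longrightarrow> f r j = 0"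
  shows "det_of n f = 0"
  using det_of_unit_row[of r n 0 f 0] assms by auto

lemma det_of_1: "det_of (Suc 0) f = f 0 0"
  unfolding det_of_def by (subst det_single) auto

lemma det_of_2: "det_of 2 f = f 0 0 * f 1 1 - f 0 1 * f 1 0"
proof -
  let ?A = "mat 2 2 (\<lambda>(i,j). f i j)"
  have "det_of 2 f = (\<Sum>j<2. ?A $$ (0,j) * cofactor ?A 0 j)"
    unfolding det_of_def by (rule laplace_expansion_row) auto
  also have "\<dots> = f 0 0 * f 1 1 - f 0 1 * f 1 0"
    by (simp add: numeral_2_eq_2 cofactor_det_of det_of_1 skip_def)
  finally show ?thesis .
qed

text \<open>A matrix whose inner columns 1..m are unit columns has the determinant of its 2 \<times> 2
  corner submatrix; this evaluates the determinant of the matrix B in the Desnanot--Jacobi proof.\<close>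
lemma det_of_middle_units:
  assumes "\<And>i j. i < m+2 \<Longrightarrow> 1 \<le> j \<Longrightarrow> j \<le> m \<Longrightarrow> f i j = (if i = j then 1 else 0)"
  shows "det_of (m+2) f = f 0 0 * f (m+1) (m+1) - f 0 (m+1) * f (m+1) 0"
  using assms
proof (induction m arbitrary: f)
  case 0
  then show ?case using det_of_2[of f] by (simp add: numeral_2_eq_2)
next
  case (Suc m)
  have "det_of (Suc m + 2) f = det_of (m+2) (\<lambda>i j. f (skip 1 i) (skip 1 j))"
    by (subst det_of_unit_col[of 1 _ 1]) (use Suc.prems in auto)
  also have "\<dots> = f 0 0 * f (m+2) (m+2) - f 0 (m+2) * f (m+2) 0"
    by (subst Suc.IH) (use Suc.prems in \<open>auto simp: skip_def\<close>)
  finally show ?case by simp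
qed

lemma det_of_two_unit_columns:
  assumes first: "\<And>i. i < k+2 \<Longrightarrow> f i 0 = (if i = 0 then c else 0)"
    and last: "\<And>i. i < k+2 \<Longrightarrow> f i (k+1) = (if i = k+1 then c else 0)"
  shows "det_of (k+2) f = c * c * det_of k (\<lambda>i j. f (Suc i) (Suc j))"
proof -
  have last': "f (Suc i) (Suc k) = (if i = k then c else 0)" if "i < k+1" for i
    using last[of "Suc i"] that by simp
  have "det_of (k+2) f = c * det_of (k+1) (\<lambda>i j. f (Suc i) (Suc j))"
    by (subst det_of_unit_col[of 0 _ 0]) (auto simp: first)
  also have "det_of (k+1) (\<lambda>i j. f (Suc i) (Suc j))
           = c * det_of k (\<lambda>i j. f (Suc (skip k i)) (Suc (skip k j)))"
    by (subst det_of_unit_col[of k _ k]) (auto simp: last' power_add[symmetric] mult_2[symmetric])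
  also have "det_of k (\<lambda>i j. f (Suc (skip k i)) (Suc (skip k j))) = det_of k (\<lambda>i j. f (Suc i) (Suc j))"
    by (rule det_of_cong) auto
  finally show ?thesis by (simp add: mult.assoc)
qed

lemma mult_adjugate_columns:
  assumes A: "A \<in> carrier_mat n n"
  shows "A * mat n n (\<lambda>(i,j). if j \<in> J then adj_mat A $$ (i,j) else if i = j then 1 else 0)
       = mat n n (\<lambda>(i,j). if j \<in> J then (if i = j then det A else 0) else A $$ (i,j))"
    (is "A * ?B = ?H")
proof (rule eq_matI)
  fix i j assume "i < dim_row ?H" "j < dim_col ?H"
  then have i: "i < n" and j: "j < n" by auto
  have adj: "adj_mat A \<in> carrier_mat n n" and A_adj: "A * adj_mat A = det A \<cdot>\<^sub>m 1\<^sub>m n"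
    using adj_mat[OF A] by auto
  show "(A * ?B) $$ (i,j) = ?H $$ (i,j)"
  proof (cases "j \<in> J")
    case True
    then have "col ?B j = col (adj_mat A) j"
      using adj j by auto
    then have "(A * ?B) $$ (i,j) = (A * adj_mat A) $$ (i,j)"
      using A adj i j by simp
    then show ?thesis using True i j unfolding A_adj by auto
  next
    case False
    have "(A * ?B) $$ (i,j) = (\<Sum>t<n. A $$ (i,t) * (if t = j then 1 else 0))"
      using A i j False by (auto simp: scalar_prod_def atLeast0LessThan intro!: sum.cong)
    also have "\<dots> = A $$ (i,j)"
      using j by (simp add: if_distrib[of "(*) _"] cong: if_cong)
    finally show ?thesis using False i j by simp
  qed
qed (use A in auto)

text \<open>Desnanot--Jacobi for a matrix A with det A \<noteq> 0: for B the identity matrix with columns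
  0 and l = k+1 taken from adj A, det B is the 2 \<times> 2 determinant of complementary cofactors,
  while A B has two scaled unit columns, so det A \<cdot> det B = (det A)^2 \<cdot> (inner minor).\<close>
lemma desnanot_jacobi_nonzero:
  fixes f :: "nat \<Rightarrow> nat \<Rightarrow> 'a::idom"
  assumes nz: "det_of (k+2) f \<noteq> 0"
  shows "det_of (k+2) f * det_of k (\<lambda>i j. f (Suc i) (Suc j)) =
         det_of (k+1) (\<lambda>i j. f (Suc i) (Suc j)) * det_of (k+1) f
       - det_of (k+1) (\<lambda>i j. f i (Suc j)) * det_of (k+1) (\<lambda>i j. f (Suc i) j)"
proof -
  define l where "l = k+1"
  define A where "A = mat (k+2) (k+2) (\<lambda>(i,j). f i j)"
  have A: "A \<in> carrier_mat (k+2) (k+2)" and dA: "det A = det_of (k+2) f"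
    unfolding A_def det_of_def by simp_all
  have adj_cof: "adj_mat A $$ (i,j) = cofactor A j i" if "i < k+2" "j < k+2" for i j
    unfolding adj_mat_def using A that by auto
  define B where "B = mat (k+2) (k+2)
      (\<lambda>(i,j). if j \<in> {0, l} then adj_mat A $$ (i,j) else if i = j then 1 else 0)"
  have B: "B \<in> carrier_mat (k+2) (k+2)" unfolding B_def by simp
  have "det B = det_of (k+2) (\<lambda>i j. B $$ (i,j))"
    unfolding det_of_def by (rule arg_cong[of _ _ det], rule eq_matI) (auto simp: B_def)
  also have "\<dots> = cofactor A 0 0 * cofactor A l l - cofactor A l 0 * cofactor A 0 l"
    by (subst det_of_middle_units) (auto simp: B_def l_def adj_cof)
  also have "\<dots> = det_of (k+1) (\<lambda>i j. f (Suc i) (Suc j)) * det_of (k+1) f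
       - det_of (k+1) (\<lambda>i j. f i (Suc j)) * det_of (k+1) (\<lambda>i j. f (Suc i) j)"
  proof -
    have "cofactor A 0 0 = det_of (k+1) (\<lambda>i j. f (Suc i) (Suc j))"
      unfolding A_def by (subst cofactor_det_of) auto
    moreover have "cofactor A l l = det_of (k+1) f"
      unfolding A_def by (subst cofactor_det_of) (auto simp: l_def intro!: det_of_cong)
    moreover have "cofactor A l 0 = (-1)^l * det_of (k+1) (\<lambda>i j. f i (Suc j))"
      unfolding A_def by (subst cofactor_det_of) (auto simp: l_def intro!: det_of_cong)
    moreover have "cofactor A 0 l = (-1)^l * det_of (k+1) (\<lambda>i j. f (Suc i) j)"
      unfolding A_def by (subst cofactor_det_of) (auto simp: l_def intro!: det_of_cong)
    moreover have "((-1::'a)^l) * (-1)^l = 1"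
      by (simp add: power_add[symmetric])
    ultimately show ?thesis
      by (metis (no_types, lifting) mult.assoc mult.left_commute mult_1)
  qed
  finally have dB: "det B = \<dots>" .
  have "det A * det B = det (A * B)"
    using det_mult[OF A B] by simp
  also have "\<dots> = det_of (k+2) (\<lambda>i j. if j \<in> {0, l} then (if i = j then det A else 0) else f i j)"
    unfolding B_def mult_adjugate_columns[OF A] det_of_def
    by (intro arg_cong[where f = det] eq_matI) (auto simp: A_def)
  also have "\<dots> = det A * det A * det_of k (\<lambda>i j. f (Suc i) (Suc j))"
    by (subst det_of_two_unit_columns) (auto simp: l_def intro!: det_of_cong)
  finally have "det B = det A * det_of k (\<lambda>i j. f (Suc i) (Suc j))"
    using nz dA by (simp add: mult.assoc)
  then show ?thesis using dB dA by simp
qed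

lemma poly_det_of: "poly (det_of n G) a = det_of n (\<lambda>i j. poly (G i j) a)"
proof -
  have "map_mat (\<lambda>p. poly p a) (mat n n (\<lambda>(i,j). G i j)) = mat n n (\<lambda>(i,j). poly (G i j) a)"
    by (rule eq_matI) auto
  then show ?thesis
    unfolding det_of_def using comm_ring_hom.hom_det[OF poly_hom.comm_ring_hom_axioms, of a "mat n n (\<lambda>(i,j). G i j)"] by simp
qed

text \<open>The general identity: apply the nonzero case to the characteristic matrix x I - (-M),
  whose determinant is monic of degree k+2, and evaluate at x = 0.\<close>
theorem desnanot_jacobi:
  fixes f :: "nat \<Rightarrow> nat \<Rightarrow> 'a::idom"
  shows "det_of (k+2) f * det_of k (\<lambda>i j. f (Suc i) (Suc j)) =
         det_of (k+1) (\<lambda>i j. f (Suc i) (Suc j)) * det_of (k+1) f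
       - det_of (k+1) (\<lambda>i j. f i (Suc j)) * det_of (k+1) (\<lambda>i j. f (Suc i) j)"
proof -
  define F where "F i j = [:f i j:] + (if i = j then [:0,1:] else 0)" for i j
  define A where "A = mat (k+2) (k+2) (\<lambda>(i,j). - f i j)"
  have A: "A \<in> carrier_mat (k+2) (k+2)" unfolding A_def by simp
  have "mat (k+2) (k+2) (\<lambda>(i,j). F i j) = char_poly_matrix A"
    unfolding char_poly_matrix_def A_def F_def by (rule eq_matI) auto
  then have "det_of (k+2) F = char_poly A"
    unfolding det_of_def char_poly_def by simp
  then have nz: "det_of (k+2) F \<noteq> 0"
    using degree_monic_char_poly[OF A] by auto
  have F0: "poly (F i j) 0 = f i j" for i j
    unfolding F_def by simp
  from arg_cong[OF desnanot_jacobi_nonzero[OF nz], of "\<lambda>p. poly p 0"]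
  show ?thesis by (simp add: poly_det_of F0)
qed

definition hankel :: "(int \<Rightarrow> 'a::comm_ring_1) \<Rightarrow> int \<Rightarrow> nat \<Rightarrow> 'a" where
  "hankel r c k = det_of k (\<lambda>i j. r (c + int (i + j)))"

definition defect_wronskian :: "(int \<Rightarrow> 'a::comm_ring_1) \<Rightarrow> int \<Rightarrow> nat \<Rightarrow> int \<Rightarrow> 'a" where
  "defect_wronskian r c k p =
     (if 0 \<le> p \<and> p \<le> int k then det_of k (\<lambda>i j. r (c + int (i + skip (nat p) j))) else 0)"

definition unit_entry :: "int \<Rightarrow> nat \<Rightarrow> 'a::comm_ring_1" where
  "unit_entry p j = (if int j = p then 1 else 0)"

definition bordered :: "(int \<Rightarrow> 'a::comm_ring_1) \<Rightarrow> int \<Rightarrow> nat \<Rightarrow> int \<Rightarrow> 'a" where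
  "bordered r c k p = det_of (Suc k) (\<lambda>i j. if i = 0 then unit_entry p j else r (c + int (i + j) - 1))"

lemma bordered_eq: "bordered r c k p = (-1)^nat p * defect_wronskian r c k p"
proof (cases "0 \<le> p \<and> p \<le> int k")
  case True
  have "bordered r c k p = (-1)^nat p *
      det_of k (\<lambda>i j. if skip 0 i = 0 then unit_entry p (skip (nat p) j) else r (c + int (skip 0 i + skip (nat p) j) - 1))"
    unfolding bordered_def using True by (subst det_of_unit_row[of 0 _ "nat p" _ 1]) (auto simp: unit_entry_def)
  also have "det_of k (\<lambda>i j. if skip 0 i = 0 then unit_entry p (skip (nat p) j) else r (c + int (skip 0 i + skip (nat p) j) - 1))
      = det_of k (\<lambda>i j. r (c + int (i + skip (nat p) j)))"
    by (rule det_of_cong) auto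
  finally show ?thesis using True by (simp add: defect_wronskian_def)
next
  case False
  then have "bordered r c k p = 0"
    unfolding bordered_def by (intro det_of_zero_row[of 0]) (auto simp: unit_entry_def)
  then show ?thesis using False by (auto simp: defect_wronskian_def)
qed

text \<open>The same for p - 1, with the sign expressed through p; valid also for p \<le> 0, where
  both sides vanish.\<close>
lemma bordered_pred: "bordered r c k (p - 1) = - ((-1)^nat p * defect_wronskian r c k (p - 1))"
proof (cases "p \<ge> 1")
  case True
  then have "nat p = Suc (nat (p - 1))" by simp
  then show ?thesis by (simp add: bordered_eq)
next
  case False
  then show ?thesis by (simp add: bordered_eq defect_wronskian_def)
qed

lemma bordered_jacobi_first:
  fixes r :: "int \<Rightarrow> 'a::idom"
  shows "bordered r c (k+2) p * hankel r (c+1) (k+1)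
       = hankel r (c+1) (k+2) * bordered r c (k+1) p - bordered r (c+1) (k+1) (p-1) * hankel r c (k+2)"
proof -
  define F :: "nat \<Rightarrow> nat \<Rightarrow> 'a" where
    "F = (\<lambda>i j. if i = 0 then unit_entry p j else r (c + int (i + j) - 1))"
  have dj: "det_of (k+3) F * det_of (k+1) (\<lambda>i j. F (Suc i) (Suc j))
      = det_of (k+2) (\<lambda>i j. F (Suc i) (Suc j)) * det_of (k+2) F
      - det_of (k+2) (\<lambda>i j. F i (Suc j)) * det_of (k+2) (\<lambda>i j. F (Suc i) j)"
    using desnanot_jacobi[of "k+1" F] by (simp add: eval_nat_numeral)
  have "det_of (k+3) F = bordered r c (k+2) p"
    unfolding bordered_def F_def by (rule det_of_cong) auto
  moreover have "det_of (k+1) (\<lambda>i j. F (Suc i) (Suc j)) = hankel r (c+1) (k+1)"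
    unfolding hankel_def F_def by (rule det_of_cong) (auto intro!: arg_cong[where f = r])
  moreover have "det_of (k+2) (\<lambda>i j. F (Suc i) (Suc j)) = hankel r (c+1) (k+2)"
    unfolding hankel_def F_def by (rule det_of_cong) (auto intro!: arg_cong[where f = r])
  moreover have "det_of (k+2) F = bordered r c (k+1) p"
    unfolding bordered_def F_def by (rule det_of_cong) auto
  moreover have "det_of (k+2) (\<lambda>i j. F i (Suc j)) = bordered r (c+1) (k+1) (p-1)"
    unfolding bordered_def F_def by (rule det_of_cong) (auto simp: unit_entry_def intro!: arg_cong[where f = r])
  moreover have "det_of (k+2) (\<lambda>i j. F (Suc i) j) = hankel r c (k+2)"
    unfolding hankel_def F_def by (rule det_of_cong) (auto intro!: arg_cong[where f = r])
  ultimately show ?thesis using dj by simp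
qed

text \<open>Desnanot--Jacobi for the same matrix with its last column replaced by the second unit
  vector; every minor other than bordered r c (k+1) p is expanded along that unit column.\<close>
lemma bordered_jacobi_second:
  fixes r :: "int \<Rightarrow> 'a::idom"
  shows "bordered r (c+1) (k+1) p * hankel r (c+1) (k+1)
       = hankel r (c+2) (k+1) * bordered r c (k+1) p + bordered r (c+2) k (p-1) * hankel r c (k+2)"
proof -
  define Q :: "nat \<Rightarrow> nat \<Rightarrow> 'a" where
    "Q = (\<lambda>i j. if j = k+2 then (if i = 1 then 1 else 0)
                else if i = 0 then unit_entry p j else r (c + int (i + j) - 1))"
  have dj: "det_of (k+3) Q * det_of (k+1) (\<lambda>i j. Q (Suc i) (Suc j))
      = det_of (k+2) (\<lambda>i j. Q (Suc i) (Suc j)) * det_of (k+2) Q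
      - det_of (k+2) (\<lambda>i j. Q i (Suc j)) * det_of (k+2) (\<lambda>i j. Q (Suc i) j)"
    using desnanot_jacobi[of "k+1" Q] by (simp add: eval_nat_numeral)
  have q1: "det_of (k+3) Q = - ((-1)^k * bordered r (c+1) (k+1) p)"
  proof -
    have "det_of (k+3) Q = (-1)^(1+(k+2)) * det_of (k+3-1) (\<lambda>i j. Q (skip 1 i) (skip (k+2) j))"
      by (subst det_of_unit_col[of 1 _ "k+2" _ 1]) (auto simp: Q_def)
    also have "det_of (k+3-1) (\<lambda>i j. Q (skip 1 i) (skip (k+2) j)) = bordered r (c+1) (k+1) p"
      unfolding bordered_def Q_def by (rule det_of_cong) (auto simp: skip_def intro!: arg_cong[where f = r])
    finally show ?thesis by simp
  qed
  have q2: "det_of (k+1) (\<lambda>i j. Q (Suc i) (Suc j)) = hankel r (c+1) (k+1)"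
    unfolding hankel_def Q_def by (rule det_of_cong) (auto intro!: arg_cong[where f = r])
  have q3: "det_of (k+2) (\<lambda>i j. Q (Suc i) (Suc j)) = - ((-1)^k * hankel r (c+2) (k+1))"
  proof -
    have "det_of (k+2) (\<lambda>i j. Q (Suc i) (Suc j))
        = (-1)^(0+(k+1)) * det_of (k+2-1) (\<lambda>i j. Q (Suc (skip 0 i)) (Suc (skip (k+1) j)))"
      by (subst det_of_unit_col[of 0 _ "k+1" _ 1]) (auto simp: Q_def)
    also have "det_of (k+2-1) (\<lambda>i j. Q (Suc (skip 0 i)) (Suc (skip (k+1) j))) = hankel r (c+2) (k+1)"
      unfolding hankel_def Q_def by (rule det_of_cong) (auto intro!: arg_cong[where f = r])
    finally show ?thesis by simp
  qed
  have q4: "det_of (k+2) Q = bordered r c (k+1) p"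
    unfolding bordered_def Q_def by (rule det_of_cong) auto
  have q5: "det_of (k+2) (\<lambda>i j. Q i (Suc j)) = (-1)^k * bordered r (c+2) k (p-1)"
  proof -
    have "det_of (k+2) (\<lambda>i j. Q i (Suc j))
        = (-1)^(1+(k+1)) * det_of (k+2-1) (\<lambda>i j. Q (skip 1 i) (Suc (skip (k+1) j)))"
      by (subst det_of_unit_col[of 1 _ "k+1" _ 1]) (auto simp: Q_def)
    also have "det_of (k+2-1) (\<lambda>i j. Q (skip 1 i) (Suc (skip (k+1) j))) = bordered r (c+2) k (p-1)"
      unfolding bordered_def Q_def
      by (rule det_of_cong) (auto simp: skip_def unit_entry_def intro!: arg_cong[where f = r])
    finally show ?thesis by simp
  qed
  have q6: "det_of (k+2) (\<lambda>i j. Q (Suc i) j) = hankel r c (k+2)"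
    unfolding hankel_def Q_def by (rule det_of_cong) (auto intro!: arg_cong[where f = r])
  from dj have "(-1)^k * (hankel r (c+2) (k+1) * bordered r c (k+1) p + bordered r (c+2) k (p-1) * hankel r c (k+2)
      - bordered r (c+1) (k+1) p * hankel r (c+1) (k+1)) = 0"
    unfolding q1 q2 q3 q4 q5 q6 by (simp add: algebra_simps)
  then show ?thesis by simp
qed

text \<open>The recurrence in offset notation: the unknown E = bordered r c (k+1) p is eliminated
  from the two identities above.\<close>
theorem defect_wronskian_recurrence:
  fixes r :: "int \<Rightarrow> 'a::idom"
  shows "hankel r (c+1) (k+1) * hankel r (c+2) (k+1) * defect_wronskian r c (k+2) p
       = hankel r c (k+2) * hankel r (c+2) (k+1) * defect_wronskian r (c+1) (k+1) (p-1)
       + hankel r (c+1) (k+1) * hankel r (c+1) (k+2) * defect_wronskian r (c+1) (k+1) p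
       + hankel r c (k+2) * hankel r (c+1) (k+2) * defect_wronskian r (c+2) k (p-1)"
proof -
  define \<sigma> :: 'a where "\<sigma> = (-1)^nat p"
  define R S R' S' where "R = hankel r c (k+2)" and "S = hankel r (c+1) (k+1)"
    and "R' = hankel r (c+1) (k+2)" and "S' = hankel r (c+2) (k+1)"
  define C C1 C2 C3 where "C = defect_wronskian r c (k+2) p"
    and "C1 = defect_wronskian r (c+1) (k+1) (p-1)" and "C2 = defect_wronskian r (c+1) (k+1) p"
    and "C3 = defect_wronskian r (c+2) k (p-1)"
  define E where "E = bordered r c (k+1) p"
  have first: "\<sigma> * C * S = R' * E + \<sigma> * C1 * R"
    using bordered_jacobi_first[of r c k p]
    unfolding bordered_eq[of r c "k+2"] bordered_pred
    by (simp add: \<sigma>_def R_def S_def R'_def C_def C1_def E_def)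
  have second: "\<sigma> * C2 * S = S' * E - \<sigma> * C3 * R"
    using bordered_jacobi_second[of r c k p]
    unfolding bordered_eq[of r "c+1" "k+1"] bordered_pred
    by (simp add: \<sigma>_def R_def S_def S'_def C2_def C3_def E_def)
  have "\<sigma> * (S * S' * C - (R * S' * C1 + S * R' * C2 + R * R' * C3))
      = S' * (\<sigma> * C * S - (R' * E + \<sigma> * C1 * R)) - R' * (\<sigma> * C2 * S - (S' * E - \<sigma> * C3 * R))"
    by (simp add: algebra_simps)
  also have "\<dots> = 0" using first second by simp
  finally have "S * S' * C = R * S' * C1 + S * R' * C2 + R * R' * C3"
    by (simp add: \<sigma>_def)
  then show ?thesis
    by (simp add: R_def S_def R'_def S'_def C_def C1_def C2_def C3_def algebra_simps)
qed

lemma hankel_r_eq_hankel: "hankel_r r1 \<beta> n = hankel r1 (n + 1 - int \<beta>) \<beta>"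
  unfolding hankel_r_def hankel_def det_of_def
  by (rule arg_cong[where f = det], rule eq_matI) (auto intro!: arg_cong[where f = r1])

lemma wronsk_c_eq_defect_wronskian:
  "wronsk_c r1 \<beta> m n = defect_wronskian r1 (n + 1 - int \<beta>) \<beta> (int \<beta> - m)"
proof (cases "0 \<le> m \<and> m \<le> int \<beta> \<and> \<beta> \<noteq> 0")
  case True
  then have "nat (int \<beta> - m) = \<beta> - nat m" by auto
  with True show ?thesis
    unfolding wronsk_c_def defect_wronskian_def det_of_def s_shift_def skip_def
    by simp (intro arg_cong[where f = det] eq_matI; auto intro!: arg_cong[where f = r1])
next
  case False
  then show ?thesis by (auto simp: wronsk_c_def defect_wronskian_def)
qed

theorem mainTheorem4:
  fixes r1 :: "int \<Rightarrow> 'a::field" and \<alpha> :: nat and m n :: int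
  assumes "\<alpha> \<ge> 2" and "0 \<le> m" and "m \<le> int \<alpha>"
  shows "hankel_r r1 (\<alpha>-1) n * hankel_r r1 (\<alpha>-1) (n+1) * wronsk_c r1 \<alpha> m n
       = hankel_r r1 \<alpha> n * hankel_r r1 (\<alpha>-1) (n+1) * wronsk_c r1 (\<alpha>-1) m n
       + hankel_r r1 (\<alpha>-1) n * hankel_r r1 \<alpha> (n+1) * wronsk_c r1 (\<alpha>-1) (m-1) n
       + hankel_r r1 \<alpha> n * hankel_r r1 \<alpha> (n+1) * wronsk_c r1 (\<alpha>-2) (m-1) n"
proof -
  obtain k where \<alpha>: "\<alpha> = k + 2"
    using assms(1) by (metis add.commute le_Suc_ex)
  define c where "c = n - 1 - int k"
  define p where "p = int k + 2 - m"
  have hankels: "hankel_r r1 \<alpha> n = hankel r1 c (k+2)" "hankel_r r1 \<alpha> (n+1) = hankel r1 (c+1) (k+2)"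
    "hankel_r r1 (\<alpha>-1) n = hankel r1 (c+1) (k+1)" "hankel_r r1 (\<alpha>-1) (n+1) = hankel r1 (c+2) (k+1)"
    by (simp_all add: hankel_r_eq_hankel \<alpha> c_def algebra_simps)
  have wronskians: "wronsk_c r1 \<alpha> m n = defect_wronskian r1 c (k+2) p"
    "wronsk_c r1 (\<alpha>-1) m n = defect_wronskian r1 (c+1) (k+1) (p-1)"
    "wronsk_c r1 (\<alpha>-1) (m-1) n = defect_wronskian r1 (c+1) (k+1) p"
    "wronsk_c r1 (\<alpha>-2) (m-1) n = defect_wronskian r1 (c+2) k (p-1)"
    by (simp_all add: wronsk_c_eq_defect_wronskian \<alpha> c_def p_def algebra_simps)
  show ?thesis
    unfolding hankels wronskians using defect_wronskian_recurrence[of r1 c k p] by (simp add: algebra_simps)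
qed

end
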